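(* Let $k, \ell \in \mathbb{N}$. Then $|\mathcal{J}(k,\ell)_n| = O(n^{k-1}F_{n,\ell})$ as $n \to \infty$, where $\mathcal{J}(k,\ell)_n$ is the set of members of $\mathcal{J}(k,\ell)$ with vertex set $[n]$.
   Context: Ordered graphs of order $n$ have vertex set $[n]$ with natural order; $A\leqslant B$ means $A$ is an induced ordered subgraph of $B$ (via an injective order-preserving map preserving adjacency and non-adjacency). $G_1+\dots+G_m$ places copies of $G_1,\dots,G_m$ consecutively from left to right with no edges between copies. For $n\in\mathbb{N}$: $J^{(n)}_1=K_n$; $J^{(n)}_2$ on $[n]$ with edge set $\{1n\}$ if $n\geqslant2$ (empty if $n=1$); $J^{(n)}_3$ on $[n]$ with edges $\{1i: 2\leqslant i\leqslant n\}$; $J^{(n)}_4$ on $[n]$ with edges $\{in: 1\leqslant i\leqslant n-1\}$; $L^{(n)}$ on $[n]$ with edges $\{i(i+1): 1\leqslant i\leqslant n-1\}$; $Q_1$ on $[4]$ with edges $\{13,24\}$; $Q_2$ on $[4]$ with edges $\{14,23\}$. For $\ell\in\{1,2,3\}$, $\mathcal{J}_\ell=\{J^{(n)}_i: i\in[4], n\leqslant\ell\}\cup\{L^{(n)}: n\leqslant\ell\}$; for $\ell\geqslant4$, $\mathcal{J}_\ell$ is this set together with $Q_1,Q_2$. An ordered graph $G$ is in $\mathcal{J}(k,\ell)$ iff there are $s\leqslant k$ ordered graphs $A_1,\dots,A_s$ with $G=A_1+\dots+A_s$ such that each $A_i=B^{(i)}_1+\dots+B^{(i)}_{t(i)}$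 with all $B^{(i)}_j\in\mathcal{J}_\ell$ and, for every pair $j,j'$, $B^{(i)}_j\leqslant B^{(i)}_{j'}$ or $B^{(i)}_{j'}\leqslant B^{(i)}_j$. $F_{n,\ell}$: $F_{n,\ell}=0$ for $n<0$, $F_{0,\ell}=1$, $F_{n,\ell}=F_{n-1,\ell}+\dots+F_{n-\ell,\ell}$ for $n\geqslant1$. *)

theory Defs
  imports Main "HOL-Library.Landau_Symbols"
begin

text \<open>An ordered graph of order n: vertex set {1..n} with natural order,
  edges stored as pairs (i,j) with 1 <= i < j <= n.\<close>
type_synonym ograph = "nat \<times> (nat \<times> nat) set"

definition ord_graph :: "nat \<Rightarrow> (nat \<times> nat) set \<Rightarrow> ograph" where
  "ord_graph n E = (n, E \<inter> {(i,j). 1 \<le> i \<and> i < j \<and> j \<le> n})"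

definition induced_le :: "ograph \<Rightarrow> ograph \<Rightarrow> bool" where
  "induced_le A B \<longleftrightarrow> (\<exists>f. strict_mono_on {1..fst A} f \<and> f ` {1..fst A} \<subseteq> {1..fst B} \<and>
      (\<forall>i j. 1 \<le> i \<longrightarrow> i < j \<longrightarrow> j \<le> fst A \<longrightarrow>
         ((i,j) \<in> snd A \<longleftrightarrow> (f i, f j) \<in> snd B)))"

definition shift_edges :: "nat \<Rightarrow> (nat \<times> nat) set \<Rightarrow> (nat \<times> nat) set" where
  "shift_edges d E = {(i + d, j + d) | i j. (i, j) \<in> E}"

fun osum :: "ograph list \<Rightarrow> ograph" where
  "osum [] = (0, {})"
| "osum (G # Gs) = (fst G + fst (osum Gs), snd G \<union> shift_edges (fst G) (snd (osum Gs)))"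

definition J1 :: "nat \<Rightarrow> ograph" where
  "J1 n = ord_graph n {(i,j). 1 \<le> i \<and> i < j \<and> j \<le> n}"
definition J2 :: "nat \<Rightarrow> ograph" where
  "J2 n = ord_graph n (if n \<ge> 2 then {(1,n)} else {})"
definition J3 :: "nat \<Rightarrow> ograph" where
  "J3 n = ord_graph n {(1,i) | i. 2 \<le> i \<and> i \<le> n}"
definition J4 :: "nat \<Rightarrow> ograph" where
  "J4 n = ord_graph n {(i,n) | i. 1 \<le> i \<and> i \<le> n - 1}"
definition Lpath :: "nat \<Rightarrow> ograph" where
  "Lpath n = ord_graph n {(i,i+1) | i. 1 \<le> i \<and> i \<le> n - 1}"
definition Q1 :: ograph where "Q1 = ord_graph 4 {(1,3),(2,4)}"
definition Q2 :: ograph where "Q2 = ord_graph 4 {(1,4),(2,3)}"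

definition Jfam :: "nat \<Rightarrow> ograph set" where
  "Jfam l = {G. \<exists>n. 1 \<le> n \<and> n \<le> l \<and>
                 (G = J1 n \<or> G = J2 n \<or> G = J3 n \<or> G = J4 n \<or> G = Lpath n)}
            \<union> (if l \<ge> 4 then {Q1, Q2} else {})"

definition induced_chain :: "ograph list \<Rightarrow> bool" where
  "induced_chain Bs \<longleftrightarrow> (\<forall>B \<in> set Bs. \<forall>B' \<in> set Bs. induced_le B B' \<or> induced_le B' B)"

definition Jkl :: "nat \<Rightarrow> nat \<Rightarrow> ograph set" where
  "Jkl k l = {G. \<exists>As. length As \<le> k \<and> G = osum (map osum As) \<and>
                 (\<forall>Bs \<in> set As. set Bs \<subseteq> Jfam l \<and> induced_chain Bs)}"

text \<open>F_{n,\<ell>}: F_0 = 1, F_n = F_{n-1} + ... + F_{n-\<ell>} (negative indices give 0).\<close>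
function Fl :: "nat \<Rightarrow> nat \<Rightarrow> nat" where
  "Fl n l = (if n = 0 then 1 else (\<Sum>i\<in>{1..min l n}. Fl (n - i) l))"
  by auto
termination by (relation "measure fst") auto

end

theory Submission
  imports Defs "HOL-Library.FuncSet"
begin

text \<open>Two members of \<open>\<J>\<^sub>\<ell>\<close> of the same order that are comparable under \<open>\<le>\<close> are equal,
  so a chain in \<open>\<J>\<^sub>\<ell>\<close> is determined by a profile (one graph of each order
  \<open>1, \<dots>, \<ell>\<close>) together with the sequence of orders of its members. A graph in
  \<open>\<J>(k,\<ell>)\<^sub>n\<close> is therefore determined by at most \<open>k\<close> profiles (finitely many, independently
  of \<open>n\<close>), the concatenated order sequence, which is a composition of \<open>n\<close> into parts
  of size at most \<open>\<ell>\<close> (there are \<open>F\<^sub>n\<^sub>,\<^sub>\<ell>\<close> of them), and at most \<open>k - 1\<close> cut points in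
  \<open>{0, \<dots>, n}\<close>, giving \<open>O(n\<^sup>k\<^sup>-\<^sup>1 F\<^sub>n\<^sub>,\<^sub>\<ell>)\<close>.\<close>

declare Fl.simps[simp del]

lemma strict_mono_on_endo_atLeastAtMost_id:
  fixes f :: "nat \<Rightarrow> nat"
  assumes mono: "strict_mono_on {1..n} f" and into: "f ` {1..n} \<subseteq> {1..n}"
    and i: "i \<in> {1..n}"
  shows "f i = i"
proof -
  have inj: "inj_on f A" if "A \<subseteq> {1..n}" for A
    using strict_mono_on_imp_inj_on[OF mono] inj_on_subset that by blast
  have "f ` {1..i} \<subseteq> {1..f i}"
    using into i strict_mono_on_leD[OF mono] by (auto simp: image_subset_iff)
  from card_inj_on_le[OF inj this] i have "i \<le> f i" by auto
  moreover have "f ` {i..n} \<subseteq> {f i..n}"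
    using into i strict_mono_on_leD[OF mono] by (auto simp: image_subset_iff)
  from card_inj_on_le[OF inj this] i have "f i \<le> i" by auto
  ultimately show ?thesis by simp
qed

definition wf_ograph :: "ograph \<Rightarrow> bool" where
  "wf_ograph G \<longleftrightarrow> snd G \<subseteq> {(i,j). 1 \<le> i \<and> i < j \<and> j \<le> fst G}"

lemma wf_ograph_ord_graph: "wf_ograph (ord_graph n E)"
  by (auto simp: wf_ograph_def ord_graph_def)

lemma fst_ord_graph [simp]: "fst (ord_graph n E) = n"
  by (simp add: ord_graph_def)

lemma induced_le_same_order_eq:
  assumes "induced_le A B" "fst A = fst B" "wf_ograph A" "wf_ograph B"
  shows "A = B"
proof -
  obtain f where "strict_mono_on {1..fst A} f" "f ` {1..fst A} \<subseteq> {1..fst B}"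
    and edges: "\<And>i j. 1 \<le> i \<Longrightarrow> i < j \<Longrightarrow> j \<le> fst A \<Longrightarrow> (i,j) \<in> snd A \<longleftrightarrow> (f i, f j) \<in> snd B"
    using assms(1) unfolding induced_le_def by blast
  then have "f i = i" if "i \<in> {1..fst A}" for i
    using strict_mono_on_endo_atLeastAtMost_id assms(2) that by metis
  with edges have same: "(i,j) \<in> snd A \<longleftrightarrow> (i,j) \<in> snd B" if "1 \<le> i" "i < j" "j \<le> fst A" for i j
    using that by auto
  have "(i,j) \<in> snd A \<longleftrightarrow> (i,j) \<in> snd B" for i j
    using same[of i j] assms(2-4) unfolding wf_ograph_def by auto
  then have "snd A = snd B"
    by auto
  with assms(2) show ?thesis
    by (simp add: prod_eq_iff)
qed

lemma Jfam_wf_order: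
  assumes "B \<in> Jfam l"
  shows "wf_ograph B" and "fst B \<in> {1..l}"
proof -
  obtain n E where "B = ord_graph n E" "n \<in> {1..l}"
  proof -
    have "\<exists>n \<in> {1..l}. B = J1 n \<or> B = J2 n \<or> B = J3 n \<or> B = J4 n \<or> B = Lpath n
        \<or> (4 \<le> l \<and> n = 4 \<and> (B = Q1 \<or> B = Q2))"
      using assms unfolding Jfam_def by (auto split: if_splits)
    then show ?thesis
      using that unfolding J1_def J2_def J3_def J4_def Lpath_def Q1_def Q2_def by blast
  qed
  then show "wf_ograph B" and "fst B \<in> {1..l}"
    by (simp_all add: wf_ograph_ord_graph)
qed

lemma finite_Jfam: "finite (Jfam l)"
proof -
  have "Jfam l \<subseteq> J1 ` {1..l} \<union> J2 ` {1..l} \<union> J3 ` {1..l} \<union> J4 ` {1..l} \<union> Lpath ` {1..l} \<union> {Q1, Q2}"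
    unfolding Jfam_def by auto
  then show ?thesis
    by (rule finite_subset) simp
qed

lemma J1_in_Jfam: "s \<in> {1..l} \<Longrightarrow> J1 s \<in> Jfam l"
  unfolding Jfam_def by auto

definition profiles :: "nat \<Rightarrow> (nat \<Rightarrow> ograph) set" where
  "profiles l = {1..l} \<rightarrow>\<^sub>E Jfam l"

lemma finite_profiles: "finite (profiles l)"
  unfolding profiles_def by (simp add: finite_PiE finite_Jfam)

lemma induced_chain_eq_map_profile:
  assumes Bs: "set Bs \<subseteq> Jfam l" and chain: "induced_chain Bs"
  shows "\<exists>g \<in> profiles l. Bs = map g (map fst Bs)"
proof -
  have unique: "B = B'" if "B \<in> set Bs" "B' \<in> set Bs" "fst B = fst B'" for B B'
    using chain that Bs Jfam_wf_order(1) induced_le_same_order_eq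
    unfolding induced_chain_def by (metis subsetD)
  define g where "g s = (if s \<notin> {1..l} then undefined
     else if \<exists>B \<in> set Bs. fst B = s then (THE B. B \<in> set Bs \<and> fst B = s) else J1 s)" for s
  have g_fst: "g (fst B) = B" if "B \<in> set Bs" for B
  proof -
    have "(THE B'. B' \<in> set Bs \<and> fst B' = fst B) = B"
      by (rule the_equality) (use that unique in auto)
    then show ?thesis
      using that Jfam_wf_order(2) Bs unfolding g_def by auto
  qed
  have "g s \<in> Jfam l" if "s \<in> {1..l}" for s
  proof (cases "\<exists>B \<in> set Bs. fst B = s")
    case True
    then show ?thesis
      using g_fst Bs by auto
  next
    case False
    then show ?thesis
      using that J1_in_Jfam by (simp add: g_def)
  qed
  then have "g \<in> profiles l"
    unfolding profiles_def by (auto simp: g_def)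
  moreover have "Bs = map g (map fst Bs)"
    using g_fst by (simp add: map_idI)
  ultimately show ?thesis by blast
qed

lemma fst_osum: "fst (osum Gs) = sum_list (map fst Gs)"
  by (induction Gs) auto

lemma fst_osum_map_osum: "fst (osum (map osum Gss)) = sum_list (map fst (concat Gss))"
  by (induction Gss) (simp_all add: fst_osum)

lemma length_le_sum_list:
  fixes xs :: "nat list"
  assumes "\<And>x. x \<in> set xs \<Longrightarrow> 1 \<le> x"
  shows "length xs \<le> sum_list xs"
  using assms by (induction xs) fastforce+

definition compositions :: "nat \<Rightarrow> nat \<Rightarrow> nat list set" where
  "compositions l n = {cs. set cs \<subseteq> {1..l} \<and> sum_list cs = n}"

lemma finite_compositions: "finite (compositions l n)"
proof (rule finite_subset)
  show "compositions l n \<subseteq> {cs. set cs \<subseteq> {1..l} \<and> length cs \<le> n}"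
    unfolding compositions_def using length_le_sum_list by fastforce
qed (simp add: finite_lists_length_le)

lemma compositions_0: "compositions l 0 = {[]}"
proof -
  have "cs = []" if "cs \<in> compositions l 0" for cs
    using that by (cases cs) (auto simp: compositions_def)
  then show ?thesis
    unfolding compositions_def by auto
qed

lemma compositions_pos:
  assumes "0 < n"
  shows "compositions l n = (\<Union>i \<in> {1..min l n}. (#) i ` compositions l (n - i))"
proof (intro equalityI subsetI)
  fix cs assume cs: "cs \<in> compositions l n"
  with assms obtain i cs' where "cs = i # cs'"
    unfolding compositions_def by (cases cs) auto
  with cs show "cs \<in> (\<Union>i \<in> {1..min l n}. (#) i ` compositions l (n - i))"
    unfolding compositions_def by force
qed (auto simp: compositions_def)

lemma card_compositions: "card (compositions l n) = Fl n l"
proof (induction n rule: less_induct)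
  case (less n)
  show ?case
  proof (cases "n = 0")
    case True
    then show ?thesis
      by (simp add: compositions_0 Fl.simps)
  next
    case False
    then have "card (compositions l n) = card (\<Union>i \<in> {1..min l n}. (#) i ` compositions l (n - i))"
      by (simp add: compositions_pos)
    also have "\<dots> = (\<Sum>i \<in> {1..min l n}. card ((#) i ` compositions l (n - i)))"
      by (rule card_UN_disjoint) (auto simp: finite_compositions)
    also have "\<dots> = (\<Sum>i \<in> {1..min l n}. Fl (n - i) l)"
      using less False by (intro sum.cong refl) (simp add: card_image)
    also have "\<dots> = Fl n l"
      using False by (subst (2) Fl.simps) simp
    finally show ?thesis .
  qed
qed

lemma card_lists_length_le_bound:
  assumes "finite A" and "A \<noteq> {}"
  shows "card {xs. set xs \<subseteq> A \<and> length xs \<le> m} \<le> Suc m * card A ^ m"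
proof -
  have "card {xs. set xs \<subseteq> A \<and> length xs \<le> m} = (\<Sum>i\<le>m. card A ^ i)"
    using assms(1) by (rule card_lists_length_le)
  also have "\<dots> \<le> (\<Sum>i\<le>m. card A ^ m)"
    using assms by (intro sum_mono power_increasing) (auto simp: Suc_le_eq card_gt_0_iff)
  finally show ?thesis
    by simp
qed

fun split_at_lengths :: "nat list \<Rightarrow> 'a list \<Rightarrow> 'a list list" where
  "split_at_lengths [] xs = [xs]"
| "split_at_lengths (m # ms) xs = take m xs # split_at_lengths ms (drop m xs)"

lemma split_at_lengths_concat:
  "xss \<noteq> [] \<Longrightarrow> split_at_lengths (butlast (map length xss)) (concat xss) = xss"
  by (induction xss rule: list_nonempty_induct) auto

text \<open>Inverse of the encoding of a graph \<open>A\<^sub>1 + \<dots> + A\<^sub>s\<close> by the profiles of its blocks, the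
  concatenated order sequence \<open>cs\<close>, and the numbers of members of \<open>A\<^sub>1, \<dots>, A\<^sub>s\<^sub>-\<^sub>1\<close>.\<close>

definition assemble :: "(nat \<Rightarrow> ograph) list \<Rightarrow> nat list \<Rightarrow> nat list \<Rightarrow> ograph" where
  "assemble gs cs ls = osum (map2 (\<lambda>g ns. osum (map g ns)) gs (split_at_lengths ls cs))"

lemma Jkl_order_subset_assemble:
  "{G \<in> Jkl k l. fst G = n} \<subseteq> (\<lambda>(gs, cs, ls). assemble gs cs ls) `
     ({gs. set gs \<subseteq> profiles l \<and> length gs \<le> k} \<times> compositions l n
      \<times> {ls. set ls \<subseteq> {0..n} \<and> length ls \<le> k - 1})"
proof
  fix G assume "G \<in> {G \<in> Jkl k l. fst G = n}"
  then obtain As where As: "length As \<le> k" "G = osum (map osum As)"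
    and blocks: "\<forall>Bs \<in> set As. set Bs \<subseteq> Jfam l \<and> induced_chain Bs" and n: "fst G = n"
    unfolding Jkl_def by blast
  have "\<forall>Bs \<in> set As. \<exists>g. g \<in> profiles l \<and> Bs = map g (map fst Bs)"
    using blocks induced_chain_eq_map_profile by blast
  then obtain P where P: "\<forall>Bs \<in> set As. P Bs \<in> profiles l \<and> Bs = map (P Bs) (map fst Bs)"
    by (metis bchoice)
  define gs where "gs = map P As"
  define nss where "nss = map (map fst) As"
  define cs where "cs = concat nss"
  define ls where "ls = butlast (map length nss)"
  have "map2 f gs (split_at_lengths ls cs) = map2 f gs nss" for f
  proof (cases "nss = []")
    case True
    then show ?thesis
      by (simp add: gs_def nss_def)
  next
    case False
    then show ?thesis
      unfolding ls_def cs_def by (simp add: split_at_lengths_concat)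
  qed
  moreover have "map2 (\<lambda>g ns. osum (map g ns)) gs nss = map osum As"
    unfolding gs_def nss_def using P by (induction As) auto
  ultimately have G: "G = assemble gs cs ls"
    unfolding assemble_def using As(2) by metis
  have cs_Jfam: "set cs \<subseteq> {1..l}"
    using blocks Jfam_wf_order(2) unfolding cs_def nss_def by fastforce
  have cs_sum: "sum_list cs = n"
    using n As(2) fst_osum_map_osum unfolding cs_def nss_def by (simp add: map_concat)
  have "length Bs \<le> n" if "Bs \<in> set As" for Bs
  proof -
    have "length Bs \<le> length cs"
      using that unfolding cs_def nss_def by (simp add: length_concat member_le_sum_list)
    also have "\<dots> \<le> sum_list cs"
      by (rule length_le_sum_list) (use cs_Jfam in auto)
    finally show ?thesis
      using cs_sum by simp
  qed
  then have "set ls \<subseteq> {0..n}"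
    unfolding ls_def nss_def by (auto dest!: in_set_butlastD)
  moreover have "length ls \<le> k - 1" "length gs \<le> k" "set gs \<subseteq> profiles l"
    using As(1) P unfolding ls_def nss_def gs_def by auto
  moreover have "cs \<in> compositions l n"
    using cs_Jfam cs_sum unfolding compositions_def by simp
  ultimately show "G \<in> (\<lambda>(gs, cs, ls). assemble gs cs ls) `
     ({gs. set gs \<subseteq> profiles l \<and> length gs \<le> k} \<times> compositions l n
      \<times> {ls. set ls \<subseteq> {0..n} \<and> length ls \<le> k - 1})"
    using G by (auto intro!: image_eqI[of _ _ "(gs, cs, ls)"])
qed

lemma card_Jkl_order_le:
  assumes "1 \<le> k"
  shows "card {G \<in> Jkl k l. fst G = n}
    \<le> card {gs. set gs \<subseteq> profiles l \<and> length gs \<le> k} * Fl n l * (k * (n + 1) ^ (k - 1))"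
proof -
  let ?Gs = "{gs. set gs \<subseteq> profiles l \<and> length gs \<le> k}"
  let ?Ls = "{ls. set ls \<subseteq> {0..n} \<and> length ls \<le> k - 1}"
  have fin: "finite (?Gs \<times> compositions l n \<times> ?Ls)"
    by (simp add: finite_lists_length_le finite_profiles finite_compositions)
  have "card {G \<in> Jkl k l. fst G = n}
      \<le> card ((\<lambda>(gs, cs, ls). assemble gs cs ls) ` (?Gs \<times> compositions l n \<times> ?Ls))"
    by (rule card_mono[OF finite_imageI[OF fin] Jkl_order_subset_assemble])
  also have "\<dots> \<le> card (?Gs \<times> compositions l n \<times> ?Ls)"
    using fin by (rule card_image_le)
  also have "\<dots> = card ?Gs * Fl n l * card ?Ls"
    by (simp add: card_cartesian_product card_compositions)
  also have "card ?Ls \<le> k * (n + 1) ^ (k - 1)"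
    using card_lists_length_le_bound[of "{0..n}" "k - 1"] assms by simp
  finally show ?thesis
    by (simp add: mult_le_mono2)
qed

theorem lemma26:
  fixes k l :: nat
  assumes "1 \<le> k" and "1 \<le> l"
  shows "(\<lambda>n. real (card {G \<in> Jkl k l. fst G = n}))
           \<in> O(\<lambda>n. real n ^ (k - 1) * real (Fl n l))"
proof -
  define A where "A = card {gs. set gs \<subseteq> profiles l \<and> length gs \<le> k}"
  define C where "C = A * k * 2 ^ (k - 1)"
  have bound: "card {G \<in> Jkl k l. fst G = n} \<le> C * (n ^ (k - 1) * Fl n l)" if "1 \<le> n" for n
  proof -
    have "card {G \<in> Jkl k l. fst G = n} \<le> A * Fl n l * (k * (n + 1) ^ (k - 1))"
      unfolding A_def using assms(1) by (rule card_Jkl_order_le)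
    also have "\<dots> \<le> A * Fl n l * (k * (2 ^ (k - 1) * n ^ (k - 1)))"
      using that power_mono[of "n + 1" "2 * n" "k - 1"]
      by (intro mult_le_mono2) (simp add: power_mult_distrib)
    also have "\<dots> = C * (n ^ (k - 1) * Fl n l)"
      unfolding C_def by (simp add: ac_simps)
    finally show ?thesis .
  qed
  have "real (card {G \<in> Jkl k l. fst G = n}) \<le> real C * (real n ^ (k - 1) * real (Fl n l))"
    if "1 \<le> n" for n
    using of_nat_mono[OF bound[OF that]] by simp
  then show ?thesis
    by (intro bigoI[of _ "real C"] eventually_mono[OF eventually_ge_at_top[of 1]]) auto
qed

end
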